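(* (i) For every $k\ge2$, $\alpha\in(0,1)\cup(1,2)$ and $p\in(0,1)$ there exists $C_{1,k}^{\alpha,p}>0$ such that for all $n\in\mathbb{N}$ and $t\in\mathbb{R}$, $|R^{\alpha,p}_{n,1,k}(t)|\le C^{\alpha,p}_{1,k}|t|^k/n^{(k-\alpha)/\alpha}$. (ii) For every $\alpha\in(0,1)\cup(1,2)$ and $p\in(0,1)$ there exist $C_2^{\alpha,p}>0$ and $C_3^{\alpha,p}>0$ such that for all $n\in\mathbb{N}$ and $|t|\le C_2^{\alpha,p}n^{1/\alpha}$: $|x_n^{\alpha,p}(t)|/n\le\frac12$, and $|x_n^{\alpha,p}(t)|\le C_3^{\alpha,p}|t|^\alpha$ if $0<\alpha<1$, while $|x_n^{\alpha,p}(t)|\le C_3^{\alpha,p}|t|\,n^{(\alpha-1)/\alpha}$ if $1<\alpha<2$.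
   Context: Let $p\in(0,1)$, $q=1-p$, $r=1/q$, $\alpha>0$, and $\mathbf{f}_{\alpha,p}(t)=\sum_{k\ge1}e^{\mathrm{i}tr^{k/\alpha}}q^{k-1}p$ (the characteristic function of $X$ with $\mathsf{P}\{X=r^{k/\alpha}\}=q^{k-1}p$). Define $x_n^{\alpha,p}(t)=n(\mathbf{f}_{\alpha,p}(t/n^{1/\alpha})-1)$. Let $\gamma_n=n/r^{\lceil\log_r n\rceil}\in(q,1]$ and, for $k\ge2$, \[R^{\alpha,p}_{n,1,k}(t)=-\sum_{m=\lceil\log_rn\rceil}^\infty\Big(\exp\Big\{\frac{\mathrm{i}t}{r^{m/\alpha}\gamma_n^{1/\alpha}}\Big\}-\sum_{j=0}^{k-1}\frac{(\mathrm{i}t)^j}{j!\,r^{jm/\alpha}\gamma_n^{j/\alpha}}\Big)\frac{p\gamma_n}{q}r^m,\quad t\in\mathbb{R}.\] *)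

theory Defs
  imports Complex_Main
begin

definition rr :: "real \<Rightarrow> real" where
  "rr p = 1 / (1 - p)"

text \<open>Characteristic function of X with P{X = r^(k/alpha)} = q^(k-1) p, k >= 1
  (summation index shifted: k = Suc j).\<close>
definition chf :: "real \<Rightarrow> real \<Rightarrow> real \<Rightarrow> complex" where
  "chf \<alpha> p t = (\<Sum>j. exp (\<i> * complex_of_real (t * rr p powr (real (Suc j) / \<alpha>)))
                       * complex_of_real ((1 - p) ^ j * p))"

definition xn :: "real \<Rightarrow> real \<Rightarrow> nat \<Rightarrow> real \<Rightarrow> complex" where
  "xn \<alpha> p n t = of_nat n * (chf \<alpha> p (t / real n powr (1 / \<alpha>)) - 1)"

definition Mn :: "real \<Rightarrow> nat \<Rightarrow> nat" where
  "Mn p n = nat \<lceil>log (rr p) (real n)\<rceil>"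

definition gamma_n :: "real \<Rightarrow> nat \<Rightarrow> real" where
  "gamma_n p n = real n / rr p ^ Mn p n"

definition R1 :: "real \<Rightarrow> real \<Rightarrow> nat \<Rightarrow> nat \<Rightarrow> real \<Rightarrow> complex" where
  "R1 \<alpha> p n k t = - (\<Sum>i. let m = Mn p n + i; r = rr p; g = gamma_n p n in
      (exp (\<i> * complex_of_real (t / (r powr (real m / \<alpha>) * g powr (1 / \<alpha>))))
       - (\<Sum>j<k. (\<i> * complex_of_real t) ^ j /
            complex_of_real (fact j * r powr (real j * real m / \<alpha>) * g powr (real j / \<alpha>))))
      * complex_of_real (p * g / (1 - p) * r ^ m))"

end

theory Submission
  imports Defs "HOL-Probability.Characteristic_Functions"
begin

text \<open>
  (i) With A_m = (r^m \<gamma>_n)^(1/\<alpha>), the m-th summand of R_{n,1,k} is an order-k Taylor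
  remainder of exp(i x) at x = t / A_m, hence at most |t|^k / (k! A_m^k). Against the weight r^m
  this leaves (r^m \<gamma>_n)^(1 - k/\<alpha>), which decays geometrically in m because k > \<alpha>; the first
  index m = ceil(log_r n) contributes n^(1 - k/\<alpha>).

  (ii) x_n(t) / n = f(s) - 1 with s = t / n^(1/\<alpha>), and f(s) - 1 = \<Sum>_j (exp(i s \<sigma>^(j+1)) - 1) q^j p
  with \<sigma> = r^(1/\<alpha>). For \<alpha> > 1 the bound |exp(i x) - 1| \<le> |x| already gives a convergent
  geometric series, linear in |s|. For \<alpha> < 1 the series is split at the index J where
  |s| \<sigma>^J \<approx> 1: below J the same bound gives a geometric sum dominated by its last term, above J
  the bound |exp(i x) - 1| \<le> 2 gives the tail 2 q^J, and both are O(q^J) = O(|s|^\<alpha>).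
  Taking |s| small makes |f(s) - 1| \<le> 1/2.
\<close>

lemma rr_gt_1: "0 < p \<Longrightarrow> p < 1 \<Longrightarrow> rr p > 1"
  unfolding rr_def by (simp add: field_simps)

lemma one_minus_eq_inverse_rr: "p < 1 \<Longrightarrow> 1 - p = 1 / rr p"
  unfolding rr_def by simp

lemma rr_powr_mult_one_minus:
  "0 < p \<Longrightarrow> p < 1 \<Longrightarrow> rr p powr a * (1 - p) = rr p powr (a - 1)"
  using rr_gt_1[of p] by (simp add: one_minus_eq_inverse_rr powr_diff)

lemma powr_real_of_nat_mult: "0 < (x::real) \<Longrightarrow> x powr (real j * c) = (x powr c) ^ j"
  by (simp add: powr_powr[symmetric] powr_realpow mult.commute)

lemma norm_suminf_le_geometric:
  fixes f :: "nat \<Rightarrow> 'a::banach"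
  assumes "\<And>i. norm (f i) \<le> c * \<beta> ^ i" and "0 \<le> \<beta>" "\<beta> < 1"
  shows "norm (suminf f) \<le> c / (1 - \<beta>)"
proof -
  have "norm (suminf f) \<le> (\<Sum>i. c * \<beta> ^ i)"
    using assms by (intro norm_suminf_le summable_mult summable_geometric) auto
  also have "\<dots> = c / (1 - \<beta>)"
    using assms by (simp add: suminf_mult suminf_geometric)
  finally show ?thesis .
qed

lemma norm_iexp_taylor_remainder_le:
  assumes "A > 0" "k \<ge> 1"
  shows "cmod (iexp (t / A) - (\<Sum>j<k. (\<i> * of_real t) ^ j / of_real (fact j * A ^ j)))
           \<le> \<bar>t\<bar> ^ k / (fact k * A ^ k)"
proof -
  obtain k' where k: "k = Suc k'" using assms(2) by (cases k) auto
  have "(\<Sum>j<k. (\<i> * of_real t) ^ j / of_real (fact j * A ^ j))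
          = (\<Sum>j\<le>k'. (\<i> * of_real (t / A)) ^ j / fact j)"
    unfolding k lessThan_Suc_atMost[symmetric]
    using assms(1) by (intro sum.cong) (simp_all add: power_mult_distrib power_divide field_simps)
  then have "cmod (iexp (t / A) - (\<Sum>j<k. (\<i> * of_real t) ^ j / of_real (fact j * A ^ j)))
      = cmod (iexp (t / A) - (\<Sum>j\<le>k'. (\<i> * of_real (t / A)) ^ j / fact j))"
    by (simp only:)
  also have "\<dots> \<le> \<bar>t / A\<bar> ^ Suc k' / fact (Suc k')"
    by (rule iexp_approx1)
  also have "\<dots> = \<bar>t\<bar> ^ k / (fact k * A ^ k)"
    using assms(1) k by (simp add: power_divide abs_divide)
  finally show ?thesis .
qed

lemma scaled_weight_eq:
  fixes r g :: real
  assumes "r > 0" "g > 0"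
  shows "g * r ^ (M + i) / (r powr (real (M + i) / \<alpha>) * g powr (1 / \<alpha>)) ^ k
           = (r ^ M * g) powr (1 - real k / \<alpha>) * (r powr (1 - real k / \<alpha>)) ^ i"
  (is "?lhs = ?rhs")
proof -
  have "ln ?lhs = ln ?rhs"
    using assms by (simp add: ln_mult ln_div ln_powr ln_realpow algebra_simps diff_divide_distrib
        add_divide_distrib)
  then show ?thesis
    using assms by simp
qed

lemma norm_R1_summand_le:
  fixes r g \<alpha> :: real and m :: nat
  assumes r: "1 < r" and g: "0 < g" and k: "k \<ge> 1" and p: "0 < p" "p < 1"
  defines "A \<equiv> r powr (real m / \<alpha>) * g powr (1 / \<alpha>)"
  shows "cmod ((iexp (t / A) - (\<Sum>j<k. (\<i> * of_real t) ^ j /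
              of_real (fact j * r powr (real j * real m / \<alpha>) * g powr (real j / \<alpha>))))
            * of_real (p * g / (1 - p) * r ^ m))
         \<le> p / ((1 - p) * fact k) * \<bar>t\<bar> ^ k * (g * r ^ m / A ^ k)"
proof -
  have A: "A > 0" using r g unfolding A_def by simp
  have weight: "p * g / (1 - p) * r ^ m \<ge> 0" using p g r by simp
  have "fact j * r powr (real j * real m / \<alpha>) * g powr (real j / \<alpha>) = fact j * A ^ j" for j
    using r g powr_real_of_nat_mult[of r j "real m / \<alpha>"] powr_real_of_nat_mult[of g j "1 / \<alpha>"]
    unfolding A_def by (simp add: power_mult_distrib)
  then have "cmod ((iexp (t / A) - (\<Sum>j<k. (\<i> * of_real t) ^ j /
              of_real (fact j * r powr (real j * real m / \<alpha>) * g powr (real j / \<alpha>))))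
            * of_real (p * g / (1 - p) * r ^ m))
      = cmod (iexp (t / A) - (\<Sum>j<k. (\<i> * of_real t) ^ j / of_real (fact j * A ^ j)))
          * (p * g / (1 - p) * r ^ m)"
    using weight by (simp only: norm_mult norm_of_real abs_of_nonneg)
  also have "\<dots> \<le> \<bar>t\<bar> ^ k / (fact k * A ^ k) * (p * g / (1 - p) * r ^ m)"
    using A k weight by (intro mult_right_mono norm_iexp_taylor_remainder_le) auto
  also have "\<dots> = p / ((1 - p) * fact k) * \<bar>t\<bar> ^ k * (g * r ^ m / A ^ k)"
    by (simp add: field_simps)
  finally show ?thesis .
qed

lemma norm_R1_le:
  assumes k: "k \<ge> 2" and \<alpha>: "0 < \<alpha>" "\<alpha> < 2" and p: "0 < p" "p < 1" and n: "n \<ge> 1"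
  shows "cmod (R1 \<alpha> p n k t) \<le> p / ((1 - p) * fact k * (1 - rr p powr (1 - real k / \<alpha>)))
           * \<bar>t\<bar> ^ k / real n powr ((real k - \<alpha>) / \<alpha>)"
proof -
  define r g M e where "r = rr p" and "g = gamma_n p n" and "M = Mn p n" and "e = 1 - real k / \<alpha>"
  define c where "c = p / ((1 - p) * fact k) * \<bar>t\<bar> ^ k * real n powr e"
  have r: "r > 1" using rr_gt_1 p r_def by auto
  have g: "g > 0" using r n unfolding g_def gamma_n_def r_def by simp
  have rg: "r ^ M * g = real n" using r unfolding g_def gamma_n_def r_def M_def by simp
  have e: "e < 0" using k \<alpha> unfolding e_def by (simp add: field_simps)
  define f where "f i = (let m = M + i; r = rr p; g = gamma_n p n in
      (exp (\<i> * complex_of_real (t / (r powr (real m / \<alpha>) * g powr (1 / \<alpha>))))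
       - (\<Sum>j<k. (\<i> * complex_of_real t) ^ j /
            complex_of_real (fact j * r powr (real j * real m / \<alpha>) * g powr (real j / \<alpha>))))
      * complex_of_real (p * g / (1 - p) * r ^ m))" for i
  have "cmod (f i) \<le> c * (r powr e) ^ i" for i
  proof -
    have "cmod (f i) \<le> p / ((1 - p) * fact k) * \<bar>t\<bar> ^ k
        * (g * r ^ (M + i) / (r powr (real (M + i) / \<alpha>) * g powr (1 / \<alpha>)) ^ k)"
      using norm_R1_summand_le[where m = "M + i" and \<alpha> = \<alpha> and k = k and t = t, OF r g _ p] k
      unfolding f_def Let_def r_def[symmetric] g_def[symmetric] by simp
    also have "\<dots> = c * (r powr e) ^ i"
      using scaled_weight_eq[of r g M i \<alpha> k] r g unfolding rg c_def e_def by simp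
    finally show ?thesis .
  qed
  then have "cmod (R1 \<alpha> p n k t) \<le> c / (1 - r powr e)"
    unfolding R1_def f_def[symmetric] M_def[symmetric] norm_minus_cancel
    using r e by (intro norm_suminf_le_geometric) (auto intro: powr_less_one)
  also have "real n powr e = 1 / real n powr ((real k - \<alpha>) / \<alpha>)"
    unfolding e_def using \<alpha> n by (simp add: powr_minus_divide[symmetric] diff_divide_distrib)
  then have "c / (1 - r powr e) = p / ((1 - p) * fact k * (1 - rr p powr (1 - real k / \<alpha>)))
           * \<bar>t\<bar> ^ k / real n powr ((real k - \<alpha>) / \<alpha>)"
    unfolding c_def r_def e_def by simp
  finally show ?thesis .
qed

lemma rr_powr_Suc: "1 < r \<Longrightarrow> r powr (real (Suc j) / \<alpha>) = (r powr (1 / \<alpha>)) ^ Suc j"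
  using powr_real_of_nat_mult[of r "Suc j" "1 / \<alpha>"] by simp

lemma norm_iexp_minus_one_le_abs: "cmod (iexp x - 1) \<le> \<bar>x\<bar>"
  using iexp_approx1[of x 0] by simp

lemma norm_iexp_minus_one_le_2: "cmod (iexp x - 1) \<le> 2"
  using norm_triangle_ineq4[of "iexp x" 1] by (simp add: norm_exp_i_times)

lemma geometric_weights_sums: "0 < (p::real) \<Longrightarrow> p < 1 \<Longrightarrow> (\<lambda>j. (1 - p) ^ j * p) sums 1"
  using sums_mult2[OF geometric_sums[of "1 - p"], of p] by simp

lemma chf_minus_one_eq:
  assumes p: "0 < p" "p < 1"
  shows "chf \<alpha> p s - 1
           = (\<Sum>j. (iexp (s * (rr p powr (1 / \<alpha>)) ^ Suc j) - 1) * of_real ((1 - p) ^ j * p))"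
proof -
  define c where "c j = iexp (s * (rr p powr (1 / \<alpha>)) ^ Suc j) * of_real ((1 - p) ^ j * p)" for j
  define w where "w j = (of_real ((1 - p) ^ j * p) :: complex)" for j
  have weights: "w sums 1"
    unfolding w_def using sums_of_real[OF geometric_weights_sums[OF p]] by simp
  have "summable (\<lambda>j. norm (c j))"
    using p sums_summable[OF geometric_weights_sums[OF p]]
    by (simp add: c_def norm_mult norm_exp_i_times del: of_real_mult of_real_power of_real_diff)
  moreover have "chf \<alpha> p s = suminf c"
    unfolding chf_def c_def rr_powr_Suc[OF rr_gt_1[OF p]] ..
  ultimately have "c sums chf \<alpha> p s"
    by (simp add: summable_norm_cancel summable_sums)
  from sums_diff[OF this weights] show ?thesis
    by (simp add: c_def w_def sums_iff algebra_simps)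
qed

lemma norm_chf_minus_one_le:
  assumes p: "0 < p" "p < 1"
    and b: "\<And>j. cmod (iexp (s * (rr p powr (1 / \<alpha>)) ^ Suc j) - 1) * ((1 - p) ^ j * p) \<le> b j"
    and "summable b"
  shows "cmod (chf \<alpha> p s - 1) \<le> suminf b"
  unfolding chf_minus_one_eq[OF p] using p b \<open>summable b\<close>
  by (intro norm_suminf_le) (simp_all add: norm_mult del: of_real_mult of_real_power of_real_diff)

lemma norm_chf_minus_one_le_linear:
  assumes p: "0 < p" "p < 1" and \<alpha>: "1 < \<alpha>"
  shows "cmod (chf \<alpha> p s - 1)
           \<le> rr p powr (1 / \<alpha>) * p / (1 - rr p powr (1 / \<alpha>) * (1 - p)) * \<bar>s\<bar>"
proof -
  define \<sigma> where "\<sigma> = rr p powr (1 / \<alpha>)"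
  have r: "rr p > 1" using rr_gt_1[OF p] .
  have \<rho>: "\<sigma> * (1 - p) = rr p powr (1 / \<alpha> - 1)"
    unfolding \<sigma>_def using rr_powr_mult_one_minus[OF p] .
  then have \<rho>1: "0 \<le> \<sigma> * (1 - p)" "\<sigma> * (1 - p) < 1"
    using r \<alpha> by (auto intro: powr_less_one)
  have "cmod (iexp (s * \<sigma> ^ Suc j) - 1) * ((1 - p) ^ j * p) \<le> (\<bar>s\<bar> * \<sigma> * p) * (\<sigma> * (1 - p)) ^ j" for j
  proof -
    have "cmod (iexp (s * \<sigma> ^ Suc j) - 1) * ((1 - p) ^ j * p) \<le> \<bar>s * \<sigma> ^ Suc j\<bar> * ((1 - p) ^ j * p)"
      using p by (intro mult_right_mono norm_iexp_minus_one_le_abs) auto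
    also have "\<dots> = (\<bar>s\<bar> * \<sigma> * p) * (\<sigma> * (1 - p)) ^ j"
      using r by (simp add: \<sigma>_def abs_mult power_mult_distrib)
    finally show ?thesis .
  qed
  then have "cmod (chf \<alpha> p s - 1) \<le> (\<Sum>j. (\<bar>s\<bar> * \<sigma> * p) * (\<sigma> * (1 - p)) ^ j)"
    using \<rho>1 by (intro norm_chf_minus_one_le[OF p]) (auto simp: \<sigma>_def intro: summable_mult summable_geometric)
  also have "\<dots> = \<sigma> * p / (1 - \<sigma> * (1 - p)) * \<bar>s\<bar>"
    using \<rho>1 by (simp add: suminf_mult suminf_geometric)
  finally show ?thesis unfolding \<sigma>_def .
qed

lemma sum_power_lessThan_le:
  fixes \<rho> :: real
  assumes "1 < \<rho>"
  shows "(\<Sum>i<J. \<rho> ^ i) \<le> \<rho> ^ J / (\<rho> - 1)"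
proof -
  have "(\<Sum>i<J. \<rho> ^ i) = (\<rho> ^ J - 1) / (\<rho> - 1)"
    using assms by (simp add: sum_gp_strict divide_simps algebra_simps)
  then show ?thesis
    using assms by (simp add: divide_right_mono)
qed

lemma exists_power_bracket:
  fixes x \<sigma> :: real
  assumes "0 < x" "x \<le> 1" "1 < \<sigma>"
  shows "\<exists>J. x * \<sigma> ^ J \<le> 1 \<and> 1 < x * \<sigma> ^ Suc J"
proof -
  obtain N where "1 / x < \<sigma> ^ N" using real_arch_pow[OF assms(3)] by blast
  then have "1 < x * \<sigma> ^ N" using assms(1) by (simp add: field_simps)
  then obtain J where "\<forall>i\<le>J. \<not> 1 < x * \<sigma> ^ i" "1 < x * \<sigma> ^ Suc J"
    using ex_least_nat_less[of "\<lambda>i. 1 < x * \<sigma> ^ i"] assms(2) by auto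
  then show ?thesis by (meson le_refl not_less)
qed

lemma norm_chf_minus_one_le_split:
  assumes p: "0 < p" "p < 1" and \<rho>: "1 < rr p powr (1 / \<alpha>) * (1 - p)"
    and J: "\<bar>s\<bar> * (rr p powr (1 / \<alpha>)) ^ J \<le> 1"
  shows "cmod (chf \<alpha> p s - 1)
           \<le> (rr p powr (1 / \<alpha>) * p / (rr p powr (1 / \<alpha>) * (1 - p) - 1) + 2) * (1 - p) ^ J"
proof -
  define \<sigma> q where "\<sigma> = rr p powr (1 / \<alpha>)" and "q = 1 - p"
  have \<sigma>: "\<sigma> > 0" using rr_gt_1[OF p] unfolding \<sigma>_def by simp
  have q: "0 < q" "q < 1" using p unfolding q_def by auto
  define b where "b j = (if j < J then \<bar>s\<bar> * \<sigma> ^ Suc j * (q ^ j * p) else 2 * (q ^ j * p))" for j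
  have "(\<lambda>i. b (i + J)) = (\<lambda>i. 2 * q ^ J * (q ^ i * p))"
    unfolding b_def by (auto simp: power_add)
  moreover have "(\<lambda>i. 2 * q ^ J * (q ^ i * p)) sums (2 * q ^ J)"
    using sums_mult[OF geometric_weights_sums[OF p], of "2 * q ^ J"] unfolding q_def by simp
  ultimately have "b sums (2 * q ^ J + (\<Sum>i<J. b i))"
    using sums_iff_shift[of b J] by simp
  moreover have "cmod (chf \<alpha> p s - 1) \<le> suminf b"
  proof (rule norm_chf_minus_one_le[OF p])
    fix j
    have "cmod (iexp (s * \<sigma> ^ Suc j) - 1) \<le> (if j < J then \<bar>s\<bar> * \<sigma> ^ Suc j else 2)"
      using \<sigma> norm_iexp_minus_one_le_abs[of "s * \<sigma> ^ Suc j"] norm_iexp_minus_one_le_2[of "s * \<sigma> ^ Suc j"]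
      by (simp only: abs_mult abs_of_pos zero_less_power split: if_split) simp
    from mult_right_mono[OF this, of "q ^ j * p"]
    show "cmod (iexp (s * (rr p powr (1 / \<alpha>)) ^ Suc j) - 1) * ((1 - p) ^ j * p) \<le> b j"
      using p q unfolding b_def \<sigma>_def[symmetric] q_def[symmetric] by (simp split: if_split_asm)
  qed (use calculation in \<open>rule sums_summable\<close>)
  moreover have "(\<Sum>i<J. b i) \<le> \<sigma> * p / (\<sigma> * q - 1) * q ^ J"
  proof -
    have "(\<Sum>i<J. b i) = \<bar>s\<bar> * \<sigma> * p * (\<Sum>i<J. (\<sigma> * q) ^ i)"
      unfolding b_def power_mult_distrib by (simp add: sum_distrib_left mult_ac)
    also have "\<dots> \<le> \<bar>s\<bar> * \<sigma> * p * ((\<sigma> * q) ^ J / (\<sigma> * q - 1))"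
      using \<rho> \<sigma> p unfolding \<sigma>_def[symmetric] q_def[symmetric]
      by (intro mult_left_mono sum_power_lessThan_le) simp_all
    also have "\<dots> = \<sigma> * p / (\<sigma> * q - 1) * (\<bar>s\<bar> * \<sigma> ^ J) * q ^ J"
      by (simp add: power_mult_distrib)
    also have "\<dots> \<le> \<sigma> * p / (\<sigma> * q - 1) * q ^ J"
      using J \<rho> \<sigma> p q unfolding \<sigma>_def[symmetric] q_def[symmetric]
      by (intro mult_right_mono mult_left_le) auto
    finally show ?thesis .
  qed
  ultimately show ?thesis
    unfolding \<sigma>_def[symmetric] q_def[symmetric] by (simp add: sums_iff algebra_simps)
qed

lemma norm_chf_minus_one_le_powr:
  assumes p: "0 < p" "p < 1" and \<alpha>: "0 < \<alpha>" "\<alpha> < 1" and s: "\<bar>s\<bar> \<le> 1"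
  shows "cmod (chf \<alpha> p s - 1)
           \<le> (rr p powr (1 / \<alpha>) * p / (rr p powr (1 / \<alpha>) * (1 - p) - 1) + 2) * rr p * \<bar>s\<bar> powr \<alpha>"
proof (cases "s = 0")
  case True
  then show ?thesis by (simp add: chf_minus_one_eq[OF p])
next
  case False
  define r \<sigma> where "r = rr p" and "\<sigma> = rr p powr (1 / \<alpha>)"
  have r: "r > 1" using rr_gt_1[OF p] unfolding r_def .
  have \<rho>: "\<sigma> * (1 - p) = r powr (1 / \<alpha> - 1)"
    unfolding \<sigma>_def r_def using rr_powr_mult_one_minus[OF p] .
  then have \<rho>1: "1 < \<sigma> * (1 - p)" using r \<alpha> by simp
  have \<sigma>1: "1 < \<sigma>" using r \<alpha> unfolding \<sigma>_def r_def by simp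
  obtain J where J: "\<bar>s\<bar> * \<sigma> ^ J \<le> 1" "1 < \<bar>s\<bar> * \<sigma> ^ Suc J"
    using exists_power_bracket[OF _ s \<sigma>1] False by auto
  have "(\<sigma> ^ Suc J) powr \<alpha> = r ^ Suc J"
    using r \<alpha> unfolding \<sigma>_def r_def[symmetric] rr_powr_Suc[OF r, symmetric]
    by (simp add: powr_powr powr_add powr_realpow)
  moreover have "1 < (\<bar>s\<bar> * \<sigma> ^ Suc J) powr \<alpha>"
    using powr_less_mono2[OF \<alpha>(1) _ J(2)] by simp
  ultimately have "1 < \<bar>s\<bar> powr \<alpha> * r ^ Suc J"
    using \<sigma>1 by (simp add: powr_mult)
  then have qJ: "(1 - p) ^ J \<le> r * \<bar>s\<bar> powr \<alpha>"
    using r unfolding one_minus_eq_inverse_rr[OF p(2)] r_def[symmetric]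
    by (simp add: power_one_over field_simps)
  have "cmod (chf \<alpha> p s - 1) \<le> (\<sigma> * p / (\<sigma> * (1 - p) - 1) + 2) * (1 - p) ^ J"
    using norm_chf_minus_one_le_split[OF p] \<rho>1 J(1) unfolding \<sigma>_def by blast
  also have "\<dots> \<le> (\<sigma> * p / (\<sigma> * (1 - p) - 1) + 2) * (r * \<bar>s\<bar> powr \<alpha>)"
    using qJ \<rho>1 \<sigma>1 p by (intro mult_left_mono) auto
  finally show ?thesis
    unfolding \<sigma>_def r_def by (simp add: mult_ac)
qed

lemma norm_xn_eq: "n \<ge> 1 \<Longrightarrow> cmod (xn \<alpha> p n t) = real n * cmod (chf \<alpha> p (t / real n powr (1 / \<alpha>)) - 1)"
  unfolding xn_def by (simp add: norm_mult)

lemma xn_bounds: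
  assumes \<alpha>: "0 < \<alpha>" and \<beta>: "0 < \<beta>" and D: "0 < D"
    and chf: "\<And>s. \<bar>s\<bar> \<le> 1 \<Longrightarrow> cmod (chf \<alpha> p s - 1) \<le> D * \<bar>s\<bar> powr \<beta>"
  shows "\<exists>C2>0. \<forall>n::nat. \<forall>t::real. n \<ge> 1 \<longrightarrow> \<bar>t\<bar> \<le> C2 * real n powr (1 / \<alpha>) \<longrightarrow>
           cmod (xn \<alpha> p n t) / real n \<le> 1 / 2
           \<and> cmod (xn \<alpha> p n t) \<le> D * \<bar>t\<bar> powr \<beta> * real n powr (1 - \<beta> / \<alpha>)"
proof -
  define C2 where "C2 = min 1 ((1 / (2 * D)) powr (1 / \<beta>))"
  have "cmod (xn \<alpha> p n t) / real n \<le> 1 / 2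
           \<and> cmod (xn \<alpha> p n t) \<le> D * \<bar>t\<bar> powr \<beta> * real n powr (1 - \<beta> / \<alpha>)"
    if n: "n \<ge> 1" and t: "\<bar>t\<bar> \<le> C2 * real n powr (1 / \<alpha>)" for n :: nat and t :: real
  proof
    define s where "s = t / real n powr (1 / \<alpha>)"
    have s: "\<bar>s\<bar> \<le> C2"
      using t n unfolding s_def abs_divide by (simp add: pos_divide_le_eq)
    then have chf_s: "cmod (chf \<alpha> p s - 1) \<le> D * \<bar>s\<bar> powr \<beta>"
      by (intro chf) (simp add: C2_def)
    have "\<bar>s\<bar> powr \<beta> \<le> ((1 / (2 * D)) powr (1 / \<beta>)) powr \<beta>"
      using s \<beta> unfolding C2_def by (intro powr_mono2) auto
    also have "\<dots> = 1 / (2 * D)"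
      using \<beta> D by (simp add: powr_powr)
    finally have "D * \<bar>s\<bar> powr \<beta> \<le> 1 / 2"
      using D by (simp add: field_simps)
    then show "cmod (xn \<alpha> p n t) / real n \<le> 1 / 2"
      using chf_s n unfolding norm_xn_eq[OF n] s_def[symmetric] by simp
    have "real n powr (1 - \<beta> / \<alpha>) = real n / (real n powr (1 / \<alpha>)) powr \<beta>"
      using n by (simp add: powr_diff powr_powr)
    then have "real n * \<bar>s\<bar> powr \<beta> = \<bar>t\<bar> powr \<beta> * real n powr (1 - \<beta> / \<alpha>)"
      using n unfolding s_def abs_divide by (simp add: powr_divide)
    then show "cmod (xn \<alpha> p n t) \<le> D * \<bar>t\<bar> powr \<beta> * real n powr (1 - \<beta> / \<alpha>)"
      using mult_left_mono[OF chf_s, of "real n"] unfolding norm_xn_eq[OF n] s_def[symmetric]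
      by (simp add: mult_ac)
  qed
  moreover have "C2 > 0" using D unfolding C2_def by simp
  ultimately show ?thesis by blast
qed

lemma xn_bounds_alpha_lt_1:
  assumes p: "0 < p" "p < 1" and \<alpha>: "0 < \<alpha>" "\<alpha> < 1"
  shows "\<exists>C2>0. \<exists>C3>0. \<forall>n::nat. \<forall>t::real. n \<ge> 1 \<longrightarrow> \<bar>t\<bar> \<le> C2 * real n powr (1 / \<alpha>) \<longrightarrow>
           cmod (xn \<alpha> p n t) / real n \<le> 1 / 2 \<and> cmod (xn \<alpha> p n t) \<le> C3 * \<bar>t\<bar> powr \<alpha>"
proof -
  define D where "D = (rr p powr (1 / \<alpha>) * p / (rr p powr (1 / \<alpha>) * (1 - p) - 1) + 2) * rr p"
  have "1 < rr p powr (1 / \<alpha>) * (1 - p)"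
    using rr_gt_1[OF p] \<alpha> by (simp add: rr_powr_mult_one_minus[OF p])
  then have "D > 0"
    using rr_gt_1[OF p] p unfolding D_def by (simp add: add_pos_nonneg)
  then obtain C2 where "C2 > 0" and bounds: "\<forall>n::nat. \<forall>t::real. n \<ge> 1 \<longrightarrow> \<bar>t\<bar> \<le> C2 * real n powr (1 / \<alpha>) \<longrightarrow>
      cmod (xn \<alpha> p n t) / real n \<le> 1 / 2
      \<and> cmod (xn \<alpha> p n t) \<le> D * \<bar>t\<bar> powr \<alpha> * real n powr (1 - \<alpha> / \<alpha>)"
    using xn_bounds[OF \<alpha>(1) \<alpha>(1) _ norm_chf_minus_one_le_powr[OF p \<alpha>]] unfolding D_def[symmetric] by blast
  have "1 - \<alpha> / \<alpha> = 0"
    using \<alpha> by simp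
  with bounds have "\<forall>n::nat. \<forall>t::real. n \<ge> 1 \<longrightarrow> \<bar>t\<bar> \<le> C2 * real n powr (1 / \<alpha>) \<longrightarrow>
      cmod (xn \<alpha> p n t) / real n \<le> 1 / 2 \<and> cmod (xn \<alpha> p n t) \<le> D * \<bar>t\<bar> powr \<alpha>"
    by simp
  with \<open>C2 > 0\<close> \<open>D > 0\<close> show ?thesis
    by blast
qed

lemma xn_bounds_alpha_gt_1:
  assumes p: "0 < p" "p < 1" and \<alpha>: "1 < \<alpha>"
  shows "\<exists>C2>0. \<exists>C3>0. \<forall>n::nat. \<forall>t::real. n \<ge> 1 \<longrightarrow> \<bar>t\<bar> \<le> C2 * real n powr (1 / \<alpha>) \<longrightarrow>
           cmod (xn \<alpha> p n t) / real n \<le> 1 / 2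
           \<and> cmod (xn \<alpha> p n t) \<le> C3 * \<bar>t\<bar> * real n powr ((\<alpha> - 1) / \<alpha>)"
proof -
  define D where "D = rr p powr (1 / \<alpha>) * p / (1 - rr p powr (1 / \<alpha>) * (1 - p))"
  have "rr p powr (1 / \<alpha>) * (1 - p) < 1"
    using rr_gt_1[OF p] \<alpha> by (simp add: rr_powr_mult_one_minus[OF p] powr_less_one)
  then have "D > 0"
    using p rr_gt_1[OF p] unfolding D_def by (intro divide_pos_pos mult_pos_pos) auto
  moreover have "cmod (chf \<alpha> p s - 1) \<le> D * \<bar>s\<bar> powr 1" for s
    using norm_chf_minus_one_le_linear[OF p \<alpha>] unfolding D_def by simp
  ultimately obtain C2 where "C2 > 0" and bounds: "\<forall>n::nat. \<forall>t::real. n \<ge> 1 \<longrightarrow> \<bar>t\<bar> \<le> C2 * real n powr (1 / \<alpha>) \<longrightarrow>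
      cmod (xn \<alpha> p n t) / real n \<le> 1 / 2
      \<and> cmod (xn \<alpha> p n t) \<le> D * \<bar>t\<bar> powr 1 * real n powr (1 - 1 / \<alpha>)"
    using xn_bounds[of \<alpha> 1 D p] \<alpha> by (metis less_trans zero_less_one)
  moreover have "1 - 1 / \<alpha> = (\<alpha> - 1) / \<alpha>"
    using \<alpha> by (simp add: field_simps)
  ultimately have "\<forall>n::nat. \<forall>t::real. n \<ge> 1 \<longrightarrow> \<bar>t\<bar> \<le> C2 * real n powr (1 / \<alpha>) \<longrightarrow>
      cmod (xn \<alpha> p n t) / real n \<le> 1 / 2
      \<and> cmod (xn \<alpha> p n t) \<le> D * \<bar>t\<bar> * real n powr ((\<alpha> - 1) / \<alpha>)"
    by simp
  with \<open>C2 > 0\<close> \<open>D > 0\<close> show ?thesis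
    by blast
qed

theorem lemma3:
  shows "(\<forall>k::nat. \<forall>\<alpha>::real. \<forall>p::real.
            k \<ge> 2 \<longrightarrow> ((0 < \<alpha> \<and> \<alpha> < 1) \<or> (1 < \<alpha> \<and> \<alpha> < 2)) \<longrightarrow> 0 < p \<longrightarrow> p < 1 \<longrightarrow>
            (\<exists>C>0. \<forall>n::nat. \<forall>t::real. n \<ge> 1 \<longrightarrow>
               cmod (R1 \<alpha> p n k t) \<le> C * \<bar>t\<bar> ^ k / real n powr ((real k - \<alpha>) / \<alpha>)))
       \<and> (\<forall>\<alpha>::real. \<forall>p::real.
            ((0 < \<alpha> \<and> \<alpha> < 1) \<or> (1 < \<alpha> \<and> \<alpha> < 2)) \<longrightarrow> 0 < p \<longrightarrow> p < 1 \<longrightarrow>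
            (\<exists>C2>0. \<exists>C3>0. \<forall>n::nat. \<forall>t::real. n \<ge> 1 \<longrightarrow> \<bar>t\<bar> \<le> C2 * real n powr (1 / \<alpha>) \<longrightarrow>
               cmod (xn \<alpha> p n t) / real n \<le> 1 / 2
               \<and> (\<alpha> < 1 \<longrightarrow> cmod (xn \<alpha> p n t) \<le> C3 * \<bar>t\<bar> powr \<alpha>)
               \<and> (1 < \<alpha> \<longrightarrow> cmod (xn \<alpha> p n t) \<le> C3 * \<bar>t\<bar> * real n powr ((\<alpha> - 1) / \<alpha>))))"
proof (intro conjI allI impI, goal_cases)
  case (1 k \<alpha> p)
  then have k: "k \<ge> 2" and \<alpha>: "0 < \<alpha>" "\<alpha> < 2" and p: "0 < p" "p < 1"
    by auto
  define C where "C = p / ((1 - p) * fact k * (1 - rr p powr (1 - real k / \<alpha>)))"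
  have "1 - real k / \<alpha> < 0"
    using k \<alpha> by (simp add: field_simps)
  then have "rr p powr (1 - real k / \<alpha>) < 1"
    using rr_gt_1[OF p] by (rule powr_less_one[rotated])
  then have "C > 0"
    using p unfolding C_def by simp
  with norm_R1_le[OF k \<alpha> p] show ?case
    unfolding C_def[symmetric] by blast
next
  case (2 \<alpha> p)
  then have p: "0 < p" "p < 1" by auto
  from 2 consider "0 < \<alpha>" "\<alpha> < 1" | "1 < \<alpha>" by linarith
  then show ?case
  proof cases
    case 1
    then show ?thesis
      using xn_bounds_alpha_lt_1[OF p] by auto
  next
    case 2
    then show ?thesis
      using xn_bounds_alpha_gt_1[OF p] by auto
  qed
qed

end
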